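(* For finite groups $G$ and $H$, $P_e(G)\cong P_e(H)$ if and only if $C(G)\cong C(H)$ and $|\mathrm{Cyc}(G)|=|\mathrm{Cyc}(H)|$.
   Context: All groups are finite. For a group $X$, the enhanced power graph $P_e(X)$ is the simple graph with vertex set $X$ in which two distinct vertices $x,y$ are adjacent if and only if $\langle x,y\rangle$ is cyclic. Let $\mathrm{Cyc}(X)=\{x\in X : \langle x,y\rangle \text{ is cyclic for all } y\in X\}$. The cyclic graph $C(X)$ is the induced subgraph of $P_e(X)$ on the vertex set $X\setminus \mathrm{Cyc}(X)$. *)

theory Defs
  imports "HOL-Algebra.Elementary_Groups"
begin

text \<open>Simple graphs are represented by a vertex set and an adjacency relation;
  only the adjacency between vertices of the vertex set matters.\<close>

definition graph_iso :: "'a set \<Rightarrow> ('a \<Rightarrow> 'a \<Rightarrow> bool) \<Rightarrow> 'b set \<Rightarrow> ('b \<Rightarrow> 'b \<Rightarrow> bool) \<Rightarrow> bool" where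
  "graph_iso V E W F \<longleftrightarrow>
     (\<exists>f. bij_betw f V W \<and> (\<forall>x\<in>V. \<forall>y\<in>V. E x y \<longleftrightarrow> F (f x) (f y)))"

definition ep_adj :: "('a, 'b) monoid_scheme \<Rightarrow> 'a \<Rightarrow> 'a \<Rightarrow> bool" where
  "ep_adj G x y \<longleftrightarrow> x \<noteq> y \<and> cyclic_group (subgroup_generated G {x, y})"

definition Cyc :: "('a, 'b) monoid_scheme \<Rightarrow> 'a set" where
  "Cyc G = {x \<in> carrier G. \<forall>y \<in> carrier G. cyclic_group (subgroup_generated G {x, y})}"

definition enh_power_graph_iso :: "('a, 'c) monoid_scheme \<Rightarrow> ('b, 'd) monoid_scheme \<Rightarrow> bool" where
  "enh_power_graph_iso G H \<longleftrightarrow> graph_iso (carrier G) (ep_adj G) (carrier H) (ep_adj H)"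

text \<open>Isomorphism of cyclic graphs C(G) and C(H): induced subgraphs of the
  enhanced power graphs on the complements of Cyc.\<close>
definition cyclic_graph_iso :: "('a, 'c) monoid_scheme \<Rightarrow> ('b, 'd) monoid_scheme \<Rightarrow> bool" where
  "cyclic_graph_iso G H \<longleftrightarrow>
     graph_iso (carrier G - Cyc G) (ep_adj G) (carrier H - Cyc H) (ep_adj H)"

end

theory Submission
  imports Defs "HOL-Library.Equipollence"
begin

text \<open>The elements of Cyc(X) are exactly the dominating vertices of P_e(X), i.e. those
  adjacent to every other vertex. A graph isomorphism maps dominating vertices onto
  dominating vertices, so it restricts to an isomorphism of the graphs with these vertices
  removed. Conversely, an isomorphism between the remaining graphs extends by an arbitrary
  bijection between the two sets of dominating vertices, since these are adjacent to
  everything.\<close>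

definition dominating_vertices :: "'a set \<Rightarrow> ('a \<Rightarrow> 'a \<Rightarrow> bool) \<Rightarrow> 'a set" where
  "dominating_vertices V E = {x \<in> V. \<forall>y \<in> V. y \<noteq> x \<longrightarrow> E x y}"

lemma dominating_vertices_subset: "dominating_vertices V E \<subseteq> V"
  unfolding dominating_vertices_def by blast

lemma image_dominating_vertices:
  assumes f: "bij_betw f V W" and adj: "\<forall>x\<in>V. \<forall>y\<in>V. E x y \<longleftrightarrow> F (f x) (f y)"
  shows "f ` dominating_vertices V E = dominating_vertices W F"
proof -
  have W: "W = f ` V" and inj: "inj_on f V"
    using f by (auto simp: bij_betw_def)
  have mem: "x \<in> dominating_vertices V E \<longleftrightarrow> f x \<in> dominating_vertices W F"
    if "x \<in> V" for x
    using that adj inj unfolding W dominating_vertices_def by (auto simp: inj_on_eq_iff)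
  show ?thesis
  proof
    show "f ` dominating_vertices V E \<subseteq> dominating_vertices W F"
      using mem dominating_vertices_subset[of V E] by blast
    show "dominating_vertices W F \<subseteq> f ` dominating_vertices V E"
    proof
      fix z
      assume z: "z \<in> dominating_vertices W F"
      then obtain x where "x \<in> V" "z = f x"
        using dominating_vertices_subset[of W F] W by blast
      then show "z \<in> f ` dominating_vertices V E"
        using mem z by blast
    qed
  qed
qed

lemma graph_iso_remove_dominating_vertices:
  assumes "graph_iso V E W F"
  shows "graph_iso (V - dominating_vertices V E) E (W - dominating_vertices W F) F"
    and "dominating_vertices V E \<approx> dominating_vertices W F"
proof -
  obtain f where f: "bij_betw f V W" and adj: "\<forall>x\<in>V. \<forall>y\<in>V. E x y \<longleftrightarrow> F (f x) (f y)"
    using assms unfolding graph_iso_def by blast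
  have image: "f ` dominating_vertices V E = dominating_vertices W F"
    using image_dominating_vertices[OF f adj] .
  have inj: "inj_on f V"
    using f by (rule bij_betw_imp_inj_on)
  have "bij_betw f (V - dominating_vertices V E) (W - dominating_vertices W F)"
    using f image dominating_vertices_subset[of V E]
    by (metis bij_betw_def inj_on_diff inj_on_image_set_diff Diff_subset)
  then show "graph_iso (V - dominating_vertices V E) E (W - dominating_vertices W F) F"
    unfolding graph_iso_def using adj by blast
  have "bij_betw f (dominating_vertices V E) (dominating_vertices W F)"
    using image inj dominating_vertices_subset[of V E]
    by (simp add: bij_betw_def inj_on_subset)
  then show "dominating_vertices V E \<approx> dominating_vertices W F"
    unfolding eqpoll_def by blast
qed

lemma graph_iso_extend_dominating_vertices:
  assumes "symp E" "irreflp E" "symp F" "irreflp F"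
    and "graph_iso (V - dominating_vertices V E) E (W - dominating_vertices W F) F"
    and "dominating_vertices V E \<approx> dominating_vertices W F"
  shows "graph_iso V E W F"
proof -
  define D where "D = dominating_vertices V E"
  define D' where "D' = dominating_vertices W F"
  obtain f where f: "bij_betw f (V - D) (W - D')"
    and adj: "\<forall>x\<in>V - D. \<forall>y\<in>V - D. E x y \<longleftrightarrow> F (f x) (f y)"
    using assms(5) unfolding graph_iso_def D_def D'_def by blast
  obtain g where g: "bij_betw g D D'"
    using assms(6) unfolding eqpoll_def D_def D'_def by blast
  define h where "h x = (if x \<in> D then g x else f x)" for x
  have "bij_betw h (D \<union> (V - D)) (D' \<union> (W - D'))"
  proof (rule bij_betw_combine)
    show "bij_betw h D D'"
      using g by (rule bij_betw_cong[THEN iffD1, rotated]) (simp add: h_def)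
    show "bij_betw h (V - D) (W - D')"
      using f by (rule bij_betw_cong[THEN iffD1, rotated]) (simp add: h_def)
  qed blast
  moreover have "D \<subseteq> V" "D' \<subseteq> W"
    unfolding D_def D'_def by (rule dominating_vertices_subset)+
  ultimately have h: "bij_betw h V W"
    by (simp add: Un_absorb1)
  have dom_E: "E x y" if "x \<in> D \<or> y \<in> D" "x \<in> V" "y \<in> V" "x \<noteq> y" for x y
    using that \<open>symp E\<close> unfolding D_def dominating_vertices_def by (auto dest: sympD)
  have dom_F: "F x y" if "x \<in> D' \<or> y \<in> D'" "x \<in> W" "y \<in> W" "x \<noteq> y" for x y
    using that \<open>symp F\<close> unfolding D'_def dominating_vertices_def by (auto dest: sympD)
  have "E x y \<longleftrightarrow> F (h x) (h y)" if "x \<in> V" "y \<in> V" for x y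
  proof (cases "x \<in> D \<or> y \<in> D")
    case True
    have "h x \<in> D' \<or> h y \<in> D'"
      using True g unfolding h_def by (auto dest: bij_betw_apply)
    moreover have "h x \<in> W" "h y \<in> W"
      using h that by (auto dest: bij_betw_apply)
    moreover have "h x = h y \<longleftrightarrow> x = y"
      using h that by (auto simp: bij_betw_def inj_on_eq_iff)
    ultimately show ?thesis
      using True that dom_E[of x y] dom_F[of "h x" "h y"] \<open>irreflp E\<close> \<open>irreflp F\<close>
      by (cases "x = y") (auto dest: irreflpD)
  next
    case False
    then show ?thesis
      using adj that unfolding h_def by simp
  qed
  then show ?thesis
    unfolding graph_iso_def using h by blast
qed

lemma graph_iso_iff_dominating_vertices:
  assumes "symp E" "irreflp E" "symp F" "irreflp F"
  shows "graph_iso V E W F \<longleftrightarrow>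
           graph_iso (V - dominating_vertices V E) E (W - dominating_vertices W F) F \<and>
           dominating_vertices V E \<approx> dominating_vertices W F"
  using graph_iso_remove_dominating_vertices graph_iso_extend_dominating_vertices[OF assms]
  by blast

lemma symp_ep_adj: "symp (ep_adj G)"
  unfolding ep_adj_def by (auto intro: sympI simp: insert_commute)

lemma irreflp_ep_adj: "irreflp (ep_adj G)"
  unfolding ep_adj_def by (auto intro: irreflpI)

lemma (in group) Cyc_eq_dominating_vertices:
  "Cyc G = dominating_vertices (carrier G) (ep_adj G)"
  unfolding Cyc_def dominating_vertices_def ep_adj_def
  using cyclic_group_generated by fastforce

theorem corollary2:
  fixes G :: "('a, 'c) monoid_scheme" and H :: "('b, 'd) monoid_scheme"
  assumes "group G" "finite (carrier G)" "group H" "finite (carrier H)"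
  shows "enh_power_graph_iso G H \<longleftrightarrow>
           (cyclic_graph_iso G H \<and> card (Cyc G) = card (Cyc H))"
proof -
  have "finite (Cyc G)" "finite (Cyc H)"
    using assms(2,4) by (auto simp: Cyc_def)
  then have "Cyc G \<approx> Cyc H \<longleftrightarrow> card (Cyc G) = card (Cyc H)"
    by (rule eqpoll_iff_card)
  then show ?thesis
    unfolding enh_power_graph_iso_def cyclic_graph_iso_def
      group.Cyc_eq_dominating_vertices[OF assms(1)]
      group.Cyc_eq_dominating_vertices[OF assms(3)]
    using graph_iso_iff_dominating_vertices[OF symp_ep_adj irreflp_ep_adj symp_ep_adj irreflp_ep_adj]
    by blast
qed

end
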